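(* Let $k$ be a positive integer, let $e$ be the all-ones vector of length $m$, and let $S$ be a nonnegative integral vector of length $n$. Then $\mathcal{C}_{m,n}(ke,S)$ is nonempty if and only if there is a row convex matrix in $\mathcal{A}_{m,n}(ke,S)$.
   Context: $\mathcal{A}_{m,n}(R,S)$ is the set of $m\times n$ $(0,1)$-matrices with row sum vector $R$ and column sum vector $S$. A $(0,1)$-matrix is row convex if the 1's in each row occur consecutively, column convex if the 1's in each column occur consecutively, and convex if it is both. $\mathcal{C}_{m,n}(R,S)$ is the set of convex matrices in $\mathcal{A}_{m,n}(R,S)$. *)

theory Defs
  imports Main
begin

text \<open>An m x n (0,1)-matrix is represented as a function nat => nat => nat
  whose entries at (i,j) with i < m, j < n lie in {0,1}; entries outside
  the index range are required to be 0 (so that each matrix has a unique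
  representation).  Row/column sum vectors are functions nat => nat,
  only their values at indices below m resp. n are relevant.\<close>

definition zero_one_matrix :: "nat \<Rightarrow> nat \<Rightarrow> (nat \<Rightarrow> nat \<Rightarrow> nat) \<Rightarrow> bool" where
  "zero_one_matrix m n A \<longleftrightarrow>
     (\<forall>i j. A i j \<in> {0, 1}) \<and> (\<forall>i j. (i \<ge> m \<or> j \<ge> n) \<longrightarrow> A i j = 0)"

definition matA :: "nat \<Rightarrow> nat \<Rightarrow> (nat \<Rightarrow> nat) \<Rightarrow> (nat \<Rightarrow> nat) \<Rightarrow> (nat \<Rightarrow> nat \<Rightarrow> nat) set" where
  "matA m n R S = {A. zero_one_matrix m n A
      \<and> (\<forall>i<m. (\<Sum>j<n. A i j) = R i)
      \<and> (\<forall>j<n. (\<Sum>i<m. A i j) = S j)}"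

definition row_convex :: "nat \<Rightarrow> nat \<Rightarrow> (nat \<Rightarrow> nat \<Rightarrow> nat) \<Rightarrow> bool" where
  "row_convex m n A \<longleftrightarrow>
     (\<forall>i<m. \<forall>j1 j2 j3. j1 \<le> j2 \<and> j2 \<le> j3 \<and> j3 < n \<and> A i j1 = 1 \<and> A i j3 = 1 \<longrightarrow> A i j2 = 1)"

definition col_convex :: "nat \<Rightarrow> nat \<Rightarrow> (nat \<Rightarrow> nat \<Rightarrow> nat) \<Rightarrow> bool" where
  "col_convex m n A \<longleftrightarrow>
     (\<forall>j<n. \<forall>i1 i2 i3. i1 \<le> i2 \<and> i2 \<le> i3 \<and> i3 < m \<and> A i1 j = 1 \<and> A i3 j = 1 \<longrightarrow> A i2 j = 1)"

definition convex_matrix :: "nat \<Rightarrow> nat \<Rightarrow> (nat \<Rightarrow> nat \<Rightarrow> nat) \<Rightarrow> bool" where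
  "convex_matrix m n A \<longleftrightarrow> row_convex m n A \<and> col_convex m n A"

definition matC :: "nat \<Rightarrow> nat \<Rightarrow> (nat \<Rightarrow> nat) \<Rightarrow> (nat \<Rightarrow> nat) \<Rightarrow> (nat \<Rightarrow> nat \<Rightarrow> nat) set" where
  "matC m n R S = {A \<in> matA m n R S. convex_matrix m n A}"

end

theory Submission
  imports Defs "HOL-Combinatorics.Permutations"
begin

text \<open>A row convex row of length \<open>k > 0\<close> is an interval \<open>[a, a + k)\<close>, so a row convex
  matrix with all row sums \<open>k\<close> is determined by the starting points \<open>a i\<close> of its rows.
  Permuting the rows so that the starting points increase keeps every column sum and makes
  the matrix column convex: if row \<open>i\<^sub>2\<close> lies between rows \<open>i\<^sub>1\<close> and \<open>i\<^sub>3\<close> that both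
  contain column \<open>j\<close>, then \<open>a i\<^sub>2 \<le> a i\<^sub>3 \<le> j < a i\<^sub>1 + k \<le> a i\<^sub>2 + k\<close>.\<close>

lemma sum_zero_one_eq_card:
  fixes f :: "'a \<Rightarrow> nat"
  assumes "\<And>x. x \<in> X \<Longrightarrow> f x \<in> {0, 1}" and "finite X"
  shows "(\<Sum>x\<in>X. f x) = card {x\<in>X. f x = 1}"
proof -
  have "(\<Sum>x\<in>X. f x) = (\<Sum>x\<in>X. if f x = 1 then 1 else 0)"
    using assms(1) by (intro sum.cong) auto
  also have "\<dots> = card {x\<in>X. f x = 1}"
    using assms(2) by (simp add: sum.If_cases Int_def)
  finally show ?thesis .
qed

lemma order_convex_eq_atLeastLessThan:
  fixes Q :: "nat set"
  assumes "finite Q" "Q \<noteq> {}"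
    and convex: "\<And>x y z. x \<le> y \<Longrightarrow> y \<le> z \<Longrightarrow> x \<in> Q \<Longrightarrow> z \<in> Q \<Longrightarrow> y \<in> Q"
  shows "Q = {Min Q..<Min Q + card Q}"
proof -
  have Q_eq: "Q = {Min Q..Max Q}"
    using assms Min_in Max_in by (fastforce intro: convex)
  have "Min Q \<le> Max Q"
    using assms by simp
  then have "Min Q + card Q = Suc (Max Q)"
    by (subst Q_eq) simp
  then show ?thesis
    using Q_eq by (simp add: atLeastLessThanSuc_atLeastAtMost)
qed

lemma exists_sorting_permutation:
  fixes a :: "nat \<Rightarrow> 'a::linorder"
  obtains \<sigma> where "\<sigma> permutes {..<m}" "mono_on {..<m} (a \<circ> \<sigma>)"
proof -
  let ?xs = "map a [0..<m]"
  obtain \<sigma> where \<sigma>: "\<sigma> permutes {..<m}" and sorts: "permute_list \<sigma> ?xs = sort ?xs"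
    using mset_eq_permutation[of "sort ?xs" ?xs] by auto
  have "(a \<circ> \<sigma>) i = sort ?xs ! i" if "i < m" for i
    using that permute_list_nth[of \<sigma> ?xs i] permutes_in_image[OF \<sigma>, of i] \<sigma>
    by (simp add: sorts[symmetric])
  then have "mono_on {..<m} (a \<circ> \<sigma>)"
    by (intro mono_onI) (simp add: sorted_nth_mono)
  with \<sigma> show thesis by (rule that)
qed

definition interval_rows :: "nat \<Rightarrow> nat \<Rightarrow> nat \<Rightarrow> (nat \<Rightarrow> nat) \<Rightarrow> nat \<Rightarrow> nat \<Rightarrow> nat" where
  "interval_rows m n k a = (\<lambda>i j. if i < m \<and> j < n \<and> a i \<le> j \<and> j < a i + k then 1 else 0)"

lemma zero_one_matrix_interval_rows: "zero_one_matrix m n (interval_rows m n k a)"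
  by (simp add: zero_one_matrix_def interval_rows_def)

lemma row_convex_interval_rows: "row_convex m n (interval_rows m n k a)"
  by (auto simp: row_convex_def interval_rows_def split: if_splits)

lemma col_convex_interval_rows:
  assumes "mono_on {..<m} a"
  shows "col_convex m n (interval_rows m n k a)"
  unfolding col_convex_def
proof (intro allI impI)
  fix j i\<^sub>1 i\<^sub>2 i\<^sub>3
  assume "j < n" and between: "i\<^sub>1 \<le> i\<^sub>2 \<and> i\<^sub>2 \<le> i\<^sub>3 \<and> i\<^sub>3 < m
    \<and> interval_rows m n k a i\<^sub>1 j = 1 \<and> interval_rows m n k a i\<^sub>3 j = 1"
  then have "a i\<^sub>3 \<le> j" "j < a i\<^sub>1 + k"
    by (simp_all add: interval_rows_def split: if_splits)
  moreover have "a i\<^sub>1 \<le> a i\<^sub>2" "a i\<^sub>2 \<le> a i\<^sub>3"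
    using between by (auto intro: mono_onD[OF assms])
  ultimately show "interval_rows m n k a i\<^sub>2 j = 1"
    using between \<open>j < n\<close> by (simp add: interval_rows_def)
qed

lemma row_sum_interval_rows:
  assumes "i < m" "a i + k \<le> n"
  shows "(\<Sum>j<n. interval_rows m n k a i j) = k"
proof -
  have "{j\<in>{..<n}. interval_rows m n k a i j = 1} = {a i..<a i + k}"
    using assms by (auto simp: interval_rows_def)
  then show ?thesis
    by (subst sum_zero_one_eq_card) (auto simp: interval_rows_def)
qed

lemma col_sum_interval_rows_permute:
  assumes "\<sigma> permutes {..<m}"
  shows "(\<Sum>i<m. interval_rows m n k (a \<circ> \<sigma>) i j) = (\<Sum>i<m. interval_rows m n k a i j)"
proof -
  have "(\<Sum>i<m. interval_rows m n k a i j) = (\<Sum>i<m. interval_rows m n k a (\<sigma> i) j)"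
    using sum.permute[OF assms, of "\<lambda>i. interval_rows m n k a i j"] by simp
  also have "\<dots> = (\<Sum>i<m. interval_rows m n k (a \<circ> \<sigma>) i j)"
    using permutes_in_image[OF assms] by (intro sum.cong) (auto simp: interval_rows_def)
  finally show ?thesis by simp
qed

lemma row_convex_eq_interval_rows:
  assumes "A \<in> matA m n (\<lambda>i. k) S" "row_convex m n A" "k > 0"
  obtains a where "\<And>i. i < m \<Longrightarrow> a i + k \<le> n" "A = interval_rows m n k a"
proof -
  have zo: "zero_one_matrix m n A" and row_sum: "\<And>i. i < m \<Longrightarrow> (\<Sum>j<n. A i j) = k"
    using assms(1) by (auto simp: matA_def)
  define ones where "ones i = {j\<in>{..<n}. A i j = 1}" for i
  define a where "a i = Min (ones i)" for i
  have ones_eq: "ones i = {a i..<a i + k}" if "i < m" for i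
  proof -
    have card: "card (ones i) = k"
      using row_sum[OF that] zo
      by (simp add: ones_def sum_zero_one_eq_card zero_one_matrix_def)
    show ?thesis
      unfolding a_def card[symmetric]
    proof (rule order_convex_eq_atLeastLessThan)
      show "finite (ones i)"
        by (simp add: ones_def)
      then show "ones i \<noteq> {}"
        using card \<open>k > 0\<close> by auto
      show "y \<in> ones i" if "x \<le> y" "y \<le> z" "x \<in> ones i" "z \<in> ones i" for x y z
      proof -
        have "A i y = 1"
          using assms(2)[unfolded row_convex_def, rule_format, of i x y z] that \<open>i < m\<close>
          by (simp add: ones_def)
        then show ?thesis
          using that by (simp add: ones_def)
      qed
    qed
  qed
  show thesis
  proof
    show "a i + k \<le> n" if "i < m" for i
    proof -
      have "a i + (k - 1) \<in> ones i"
        using ones_eq[OF that] \<open>k > 0\<close> by simp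
      then have "a i + (k - 1) < n"
        by (simp add: ones_def)
      then show ?thesis
        using \<open>k > 0\<close> by arith
    qed
    show "A = interval_rows m n k a"
    proof (intro ext)
      fix i j
      show "A i j = interval_rows m n k a i j"
      proof (cases "i < m \<and> j < n")
        case True
        then have "j \<in> ones i \<longleftrightarrow> j \<in> {a i..<a i + k}"
          using ones_eq by simp
        then have "A i j = 1 \<longleftrightarrow> a i \<le> j \<and> j < a i + k"
          using True by (simp add: ones_def)
        moreover have "A i j \<in> {0, 1}"
          using zo by (simp add: zero_one_matrix_def)
        ultimately show ?thesis
          using True by (auto simp: interval_rows_def)
      next
        case False
        then show ?thesis
          using zo by (auto simp: zero_one_matrix_def interval_rows_def)
      qed
    qed
  qed
qed

theorem mainTheorem5:
  fixes m n k :: nat and S :: "nat \<Rightarrow> nat"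
  assumes "k > 0"
  shows "matC m n (\<lambda>i. k) S \<noteq> {} \<longleftrightarrow> (\<exists>A \<in> matA m n (\<lambda>i. k) S. row_convex m n A)"
proof
  assume "matC m n (\<lambda>i. k) S \<noteq> {}"
  then show "\<exists>A \<in> matA m n (\<lambda>i. k) S. row_convex m n A"
    unfolding matC_def convex_matrix_def by auto
next
  assume "\<exists>A \<in> matA m n (\<lambda>i. k) S. row_convex m n A"
  then obtain A where A: "A \<in> matA m n (\<lambda>i. k) S" "row_convex m n A" by blast
  obtain a where fits: "\<And>i. i < m \<Longrightarrow> a i + k \<le> n" and A_eq: "A = interval_rows m n k a"
    using row_convex_eq_interval_rows[OF A \<open>k > 0\<close>] by blast
  obtain \<sigma> where \<sigma>: "\<sigma> permutes {..<m}" "mono_on {..<m} (a \<circ> \<sigma>)"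
    by (rule exists_sorting_permutation)
  let ?B = "interval_rows m n k (a \<circ> \<sigma>)"
  have "(\<Sum>j<n. ?B i j) = k" if "i < m" for i
    using that fits permutes_in_image[OF \<sigma>(1)] by (simp add: row_sum_interval_rows)
  moreover have "(\<Sum>i<m. ?B i j) = S j" if "j < n" for j
    using that A(1) by (simp add: col_sum_interval_rows_permute[OF \<sigma>(1)] A_eq matA_def)
  ultimately have "?B \<in> matA m n (\<lambda>i. k) S"
    by (simp add: matA_def zero_one_matrix_interval_rows)
  then have "?B \<in> matC m n (\<lambda>i. k) S"
    by (simp add: matC_def convex_matrix_def row_convex_interval_rows
        col_convex_interval_rows[OF \<sigma>(2)])
  then show "matC m n (\<lambda>i. k) S \<noteq> {}" by blast
qed

end
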